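(* Let $s\in\{0,\tfrac12\}$, $\lambda\in\mathbb{C}$ and $\sigma\in\mathrm{Aut}(\mathfrak{L}^s_\lambda)$. Then $\sigma(I_k)\in\mathbf{I}:=\mathrm{span}_{\mathbb{C}}\{I_m:m\in\mathbb{Z}\}$ for every $k\in\mathbb{Z}$.
   Context: For $s\in\{0,\tfrac12\}$ and $\lambda\in\mathbb{C}$, $\mathfrak{L}^s_\lambda$ is the complex Lie superalgebra with basis $\{L_m,I_m,G_p,H_p : m\in\mathbb{Z},\ p\in s+\mathbb{Z}\}$, even part spanned by the $L_m,I_m$, odd part spanned by the $G_p,H_p$, with brackets $[L_m,L_n]=(m-n)L_{m+n}$, $[L_m,I_n]=(m-n)I_{m+n}$, $[L_m,H_p]=(\tfrac m2-p)H_{m+p}$, $[L_m,G_p]=(\tfrac m2-p)G_{m+p}+\lambda(m+1)H_{m+p}$, $[I_m,G_p]=(m-2p)H_{m+p}$, $[G_p,G_q]=I_{p+q}$, plus super-antisymmetry; all other brackets of basis elements are zero. $\mathrm{Aut}(\mathfrak{L})$ is the group of bijective parity-preserving linear maps $\sigma$ with $\sigma([x,y])=[\sigma(x),\sigma(y)]$. *)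

theory Defs
  imports Complex_Main
begin

text \<open>The parameter s is encoded by
  eps :: int with s = eps/2 (so eps = 0 or eps = 1).  The odd basis elements
  G_p, H_p with p = j + s are indexed by the integer j.\<close>

datatype bidx = Lb int | Ib int | Gb int | Hb int

fun is_even_idx :: "bidx \<Rightarrow> bool" where
  "is_even_idx (Lb _) = True"
| "is_even_idx (Ib _) = True"
| "is_even_idx (Gb _) = False"
| "is_even_idx (Hb _) = False"

fun is_I_idx :: "bidx \<Rightarrow> bool" where
  "is_I_idx (Ib _) = True"
| "is_I_idx _ = False"

type_synonym vec = "bidx \<Rightarrow> complex"

definition bv :: "bidx \<Rightarrow> vec" where
  "bv b = (\<lambda>c. if c = b then 1 else 0)"

definition supp :: "vec \<Rightarrow> bidx set" where
  "supp x = {b. x b \<noteq> 0}"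

definition V :: "vec set" where
  "V = {x. finite (supp x)}"

definition smult :: "complex \<Rightarrow> vec \<Rightarrow> vec" where
  "smult c x = (\<lambda>b. c * x b)"

definition vadd :: "vec \<Rightarrow> vec \<Rightarrow> vec" where
  "vadd x y = (\<lambda>b. x b + y b)"

definition half_idx :: "int \<Rightarrow> int \<Rightarrow> complex" where
  "half_idx eps j = of_int j + of_int eps / 2"   \<comment> \<open>the value p = j + s\<close>

text \<open>Bracket of basis elements (including super-antisymmetry).\<close>
fun brb :: "int \<Rightarrow> complex \<Rightarrow> bidx \<Rightarrow> bidx \<Rightarrow> vec" where
  "brb eps lam (Lb m) (Lb n) = smult (of_int (m - n)) (bv (Lb (m + n)))"
| "brb eps lam (Lb m) (Ib n) = smult (of_int (m - n)) (bv (Ib (m + n)))"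
| "brb eps lam (Ib n) (Lb m) = smult (- of_int (m - n)) (bv (Ib (m + n)))"
| "brb eps lam (Lb m) (Hb j) = smult (of_int m / 2 - half_idx eps j) (bv (Hb (m + j)))"
| "brb eps lam (Hb j) (Lb m) = smult (- (of_int m / 2 - half_idx eps j)) (bv (Hb (m + j)))"
| "brb eps lam (Lb m) (Gb j) =
     vadd (smult (of_int m / 2 - half_idx eps j) (bv (Gb (m + j)))) (smult (lam * of_int (m + 1)) (bv (Hb (m + j))))"
| "brb eps lam (Gb j) (Lb m) =
     vadd (smult (- (of_int m / 2 - half_idx eps j)) (bv (Gb (m + j)))) (smult (- (lam * of_int (m + 1))) (bv (Hb (m + j))))"
| "brb eps lam (Ib m) (Gb j) = smult (of_int m - 2 * half_idx eps j) (bv (Hb (m + j)))"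
| "brb eps lam (Gb j) (Ib m) = smult (- (of_int m - 2 * half_idx eps j)) (bv (Hb (m + j)))"
| "brb eps lam (Gb j) (Gb k) = bv (Ib (j + k + eps))"   \<comment> \<open>p + q = j + k + 2s\<close>
| "brb eps lam _ _ = (\<lambda>_. 0)"

definition br :: "int \<Rightarrow> complex \<Rightarrow> vec \<Rightarrow> vec \<Rightarrow> vec" where
  "br eps lam x y = (\<lambda>c. \<Sum>a\<in>supp x. \<Sum>b\<in>supp y. x a * y b * brb eps lam a b c)"

definition even_vec :: "vec \<Rightarrow> bool" where
  "even_vec x = (\<forall>b. x b \<noteq> 0 \<longrightarrow> is_even_idx b)"

definition odd_vec :: "vec \<Rightarrow> bool" where
  "odd_vec x = (\<forall>b. x b \<noteq> 0 \<longrightarrow> \<not> is_even_idx b)"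

definition is_aut :: "int \<Rightarrow> complex \<Rightarrow> (vec \<Rightarrow> vec) \<Rightarrow> bool" where
  "is_aut eps lam \<sigma> \<longleftrightarrow>
     bij_betw \<sigma> V V \<and>
     (\<forall>x\<in>V. \<forall>y\<in>V. \<sigma> (vadd x y) = vadd (\<sigma> x) (\<sigma> y)) \<and>
     (\<forall>c. \<forall>x\<in>V. \<sigma> (smult c x) = smult c (\<sigma> x)) \<and>
     (\<forall>x\<in>V. (even_vec x \<longrightarrow> even_vec (\<sigma> x)) \<and> (odd_vec x \<longrightarrow> odd_vec (\<sigma> x))) \<and>
     (\<forall>x\<in>V. \<forall>y\<in>V. \<sigma> (br eps lam x y) = br eps lam (\<sigma> x) (\<sigma> y))"

definition Ispan :: "vec set" where
  "Ispan = {x \<in> V. \<forall>b. x b \<noteq> 0 \<longrightarrow> is_I_idx b}"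

end

theory Submission
  imports Defs
begin

text \<open>Since \<open>I\<^sub>k = [G\<^sub>0, G\<^sub>k\<^sub>-\<^sub>2\<^sub>s]\<close>, an automorphism maps \<open>I\<^sub>k\<close> to the bracket of two odd
  elements, and the bracket of any two odd elements lies in \<open>span {I\<^sub>m}\<close> because
  \<open>[G\<^sub>p, G\<^sub>q] = I\<^sub>p\<^sub>+\<^sub>q\<close> is the only nonzero bracket between odd basis elements.
  The argument works for every value of \<open>s\<close>.\<close>

lemma supp_bv: "supp (bv b) = {b}"
  by (auto simp: supp_def bv_def)

lemma bv_in_V: "bv b \<in> V"
  by (simp add: V_def supp_bv)

lemma odd_vec_bv_Gb: "odd_vec (bv (Gb j))"
  by (simp add: odd_vec_def bv_def)

lemma br_bv_bv: "br eps lam (bv a) (bv b) = brb eps lam a b"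
  unfolding br_def supp_bv by (simp add: bv_def)

lemma finite_supp_vadd: "finite (supp x) \<Longrightarrow> finite (supp y) \<Longrightarrow> finite (supp (vadd x y))"
  by (rule finite_subset[of _ "supp x \<union> supp y"]) (auto simp: supp_def vadd_def)

lemma finite_supp_smult: "finite (supp x) \<Longrightarrow> finite (supp (smult c x))"
  by (rule finite_subset[of _ "supp x"]) (auto simp: supp_def smult_def)

lemma finite_supp_brb: "finite (supp (brb eps lam a b))"
  by (cases a; cases b) (simp_all add: finite_supp_vadd finite_supp_smult supp_bv supp_def[of "\<lambda>_. 0"])

lemma brb_odd_odd_is_I:
  assumes "\<not> is_even_idx a" "\<not> is_even_idx b" "brb eps lam a b c \<noteq> 0"
  shows "is_I_idx c"
  using assms by (cases a; cases b) (auto simp: bv_def smult_def split: if_splits)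

lemma supp_br_subset:
  "supp (br eps lam x y) \<subseteq> (\<Union>a\<in>supp x. \<Union>b\<in>supp y. supp (brb eps lam a b))"
proof
  fix c assume "c \<in> supp (br eps lam x y)"
  then have "(\<Sum>a\<in>supp x. \<Sum>b\<in>supp y. x a * y b * brb eps lam a b c) \<noteq> 0"
    by (simp add: br_def supp_def)
  then obtain a b where "a \<in> supp x" "b \<in> supp y" "x a * y b * brb eps lam a b c \<noteq> 0"
    by (meson sum.not_neutral_contains_not_neutral)
  then show "c \<in> (\<Union>a\<in>supp x. \<Union>b\<in>supp y. supp (brb eps lam a b))"
    by (auto simp: supp_def)
qed

lemma br_in_V:
  assumes "x \<in> V" "y \<in> V"
  shows "br eps lam x y \<in> V"
proof -
  have "finite (\<Union>a\<in>supp x. \<Union>b\<in>supp y. supp (brb eps lam a b))"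
    using assms finite_supp_brb by (simp add: V_def)
  then show ?thesis
    unfolding V_def using finite_subset[OF supp_br_subset] by blast
qed

lemma br_odd_odd_in_Ispan:
  assumes "x \<in> V" "y \<in> V" "odd_vec x" "odd_vec y"
  shows "br eps lam x y \<in> Ispan"
proof -
  have "is_I_idx c" if "br eps lam x y c \<noteq> 0" for c
  proof -
    from that have "c \<in> supp (br eps lam x y)"
      by (simp add: supp_def)
    with supp_br_subset obtain a b
      where "a \<in> supp x" "b \<in> supp y" "c \<in> supp (brb eps lam a b)"
      by blast
    with assms(3,4) show ?thesis
      by (intro brb_odd_odd_is_I[of a b eps lam]) (simp_all add: odd_vec_def supp_def)
  qed
  with br_in_V[OF assms(1,2)] show ?thesis
    by (simp add: Ispan_def)
qed

theorem lemma3p1: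
  fixes eps :: int and lam :: complex and \<sigma> :: "vec \<Rightarrow> vec" and k :: int
  assumes "eps \<in> {0, 1}"
    and "is_aut eps lam \<sigma>"
  shows "\<sigma> (bv (Ib k)) \<in> Ispan"
proof -
  from assms(2) have onto: "\<sigma> ` V = V"
    and hom: "\<And>x y. x \<in> V \<Longrightarrow> y \<in> V \<Longrightarrow> \<sigma> (br eps lam x y) = br eps lam (\<sigma> x) (\<sigma> y)"
    and odd: "\<And>x. x \<in> V \<Longrightarrow> odd_vec x \<Longrightarrow> odd_vec (\<sigma> x)"
    unfolding is_aut_def bij_betw_def by blast+
  have \<sigma>_bv_in_V: "\<sigma> (bv b) \<in> V" for b
    using onto bv_in_V by blast
  have "bv (Ib k) = br eps lam (bv (Gb 0)) (bv (Gb (k - eps)))"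
    by (simp add: br_bv_bv)
  then have "\<sigma> (bv (Ib k)) = br eps lam (\<sigma> (bv (Gb 0))) (\<sigma> (bv (Gb (k - eps))))"
    by (simp add: hom bv_in_V)
  also have "\<dots> \<in> Ispan"
    by (intro br_odd_odd_in_Ispan \<sigma>_bv_in_V odd bv_in_V odd_vec_bv_Gb)
  finally show ?thesis .
qed

end
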